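(* Let $d$ be a metric on $\mathbb R^n$ induced by a norm, let $\{\mathbb R^n;w_1,\dots,w_N;p_1,\dots,p_N\}$ be a hyperbolic IFS (contractions $w_i$ on $(\mathbb R^n,d)$, constant probabilities $p_i\in(0,1]$, $\sum_ip_i=1$) with attractor $A_\infty$. For $\delta>0$ let $\{\mathcal D^n(\delta);\tilde w_1,\dots,\tilde w_N;p_1,\dots,p_N\}$ be the DIFS with the same constant probabilities, where $\tilde w_i$ is the $\delta$-roundoff of $w_i$, and let $\mathcal A_{\mathcal F}(\delta)$ be the family of all positive recurrent communication classes of its associated Markov chain. Then $$\lim_{\delta\to0}\mathcal A_k^+(\delta)=A_\infty$$ in the Hausdorff metric induced by $d$, where for each $\delta$, $\mathcal A_k^+(\delta)$ is any set from $\mathcal A_{\mathcal F}(\delta)$.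
   Context: For $m\in\mathbb Z^n$, $C_\delta(m)=\prod_{j=1}^n[(m_j-\tfrac12)\delta,(m_j+\tfrac12)\delta)$; $\mathcal D^n(\delta)=\{\delta m:m\in\mathbb Z^n\}\subset\mathbb R^n$. The $\delta$-roundoff of $x$ is $\tilde x=\delta m$ where $x\in C_\delta(m)$; the $\delta$-roundoff of $w$ is $\tilde w(\tilde x)=\widetilde{w(\tilde x)}$ on $\mathcal D^n(\delta)$. The attractor of the hyperbolic IFS is the unique nonempty compact $A_\infty$ with $A_\infty=\bigcup_iw_i(A_\infty)$. The associated Markov chain of the DIFS has transition probabilities $P(\tilde x,\tilde y)=\sum_ip_i\mathbf 1_{\{\tilde y\}}(\tilde w_i(\tilde x))$ on $\mathcal D^n(\delta)$. Accessibility: $P^k(\tilde x,\tilde y)>0$ for some $k\ge1$; a communication class is a maximal nonempty set of mutually accessible states; a state is positive recurrent if the chain started there returns a.s. with finite expected return time; a positive recurrent communication class is a communication class of positive recurrent states. *)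

theory Defs
  imports "HOL-Analysis.Analysis"
begin

definition is_norm :: "(real^'n \<Rightarrow> real) \<Rightarrow> bool" where
  "is_norm nrm \<longleftrightarrow> (\<forall>x. nrm x = 0 \<longleftrightarrow> x = 0) \<and>
     (\<forall>x y. nrm (x + y) \<le> nrm x + nrm y) \<and> (\<forall>c x. nrm (c *\<^sub>R x) = \<bar>c\<bar> * nrm x)"

definition contraction_wrt :: "(real^'n \<Rightarrow> real^'n \<Rightarrow> real) \<Rightarrow> (real^'n \<Rightarrow> real^'n) \<Rightarrow> bool" where
  "contraction_wrt d f \<longleftrightarrow> (\<exists>s. 0 \<le> s \<and> s < 1 \<and> (\<forall>x y. d (f x) (f y) \<le> s * d x y))"

text \<open>Hausdorff distance w.r.t. a metric d, valued in [0,\<infinity>] (no truncation for unbounded sets).\<close>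
definition hausdorff_dist :: "('a \<Rightarrow> 'a \<Rightarrow> real) \<Rightarrow> 'a set \<Rightarrow> 'a set \<Rightarrow> ennreal" where
  "hausdorff_dist d A B = max (SUP a\<in>A. INF b\<in>B. ennreal (d a b)) (SUP b\<in>B. INF a\<in>A. ennreal (d a b))"

definition cell :: "real \<Rightarrow> (int^'n) \<Rightarrow> (real^'n) set" where
  "cell \<delta> m = {x. \<forall>j. (real_of_int (m$j) - 1/2) * \<delta> \<le> x$j \<and> x$j < (real_of_int (m$j) + 1/2) * \<delta>}"

definition lattice :: "real \<Rightarrow> (real^'n) set" where
  "lattice \<delta> = {\<delta> *\<^sub>R (\<chi> j. real_of_int (m$j)) | m :: int^'n. True}"

text \<open>\<delta>-roundoff: \<delta> m where x lies in cell \<delta> m, i.e. m_j = floor(x_j/\<delta> + 1/2).\<close>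
definition roundoff :: "real \<Rightarrow> real^'n \<Rightarrow> real^'n" where
  "roundoff \<delta> x = (\<chi> j. \<delta> * real_of_int \<lfloor>x$j / \<delta> + 1/2\<rfloor>)"

primrec Pk :: "nat \<Rightarrow> (nat \<Rightarrow> real^'n \<Rightarrow> real^'n) \<Rightarrow> (nat \<Rightarrow> real) \<Rightarrow> real \<Rightarrow>
    nat \<Rightarrow> real^'n \<Rightarrow> real^'n \<Rightarrow> real" where
  "Pk M w p \<delta> 0 x y = (if x = y then 1 else 0)"
| "Pk M w p \<delta> (Suc k) x y = (\<Sum>i<M. p i * Pk M w p \<delta> k (roundoff \<delta> (w i x)) y)"

text \<open>First-passage probabilities: probability that the chain from x first hits y at step k (k \<ge> 1).\<close>
primrec fpass :: "nat \<Rightarrow> (nat \<Rightarrow> real^'n \<Rightarrow> real^'n) \<Rightarrow> (nat \<Rightarrow> real) \<Rightarrow> real \<Rightarrow>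
    nat \<Rightarrow> real^'n \<Rightarrow> real^'n \<Rightarrow> real" where
  "fpass M w p \<delta> 0 x y = 0"
| "fpass M w p \<delta> (Suc k) x y = (\<Sum>i<M. p i *
      (if roundoff \<delta> (w i x) = y then (if k = 0 then 1 else 0)
       else fpass M w p \<delta> k (roundoff \<delta> (w i x)) y))"

definition accessible where
  "accessible M w p \<delta> x y \<longleftrightarrow> (\<exists>k\<ge>1. Pk M w p \<delta> k x y > 0)"

definition mutually_accessible where
  "mutually_accessible M w p \<delta> C \<longleftrightarrow>
     (\<forall>x\<in>C. \<forall>y\<in>C. accessible M w p \<delta> x y \<and> accessible M w p \<delta> y x)"

definition communication_class where
  "communication_class M w p \<delta> C \<longleftrightarrow> C \<noteq> {} \<and> C \<subseteq> lattice \<delta> \<and>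
     mutually_accessible M w p \<delta> C \<and>
     (\<forall>D. C \<subseteq> D \<and> D \<subseteq> lattice \<delta> \<and> mutually_accessible M w p \<delta> D \<longrightarrow> D = C)"

text \<open>Positive recurrence: return a.s. (first-return probabilities sum to 1) with finite
  expected return time.\<close>
definition positive_recurrent where
  "positive_recurrent M w p \<delta> x \<longleftrightarrow>
     (\<lambda>k. fpass M w p \<delta> k x x) sums 1 \<and> summable (\<lambda>k. real k * fpass M w p \<delta> k x x)"

definition pos_rec_class where
  "pos_rec_class M w p \<delta> C \<longleftrightarrow> communication_class M w p \<delta> C \<and>
     (\<forall>x\<in>C. positive_recurrent M w p \<delta> x)"

end

theory Submission
  imports Defs
begin

text \<open>Rounding off moves a point by at most \<open>e = \<delta> K / 2\<close>, where \<open>K\<close> is the sum of the norms of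
  the unit vectors. With a common contraction factor \<open>s\<close> and \<open>E = e / (1 - s)\<close>, applying the same
  map \<open>w i\<close>, rounded to one point and exact to another, turns their distance \<open>d\<close> into a
  distance \<open>d'\<close> with \<open>d' - E \<le> s (d - E)\<close>. A positive recurrent class \<open>C\<close> is closed under
  the rounded maps (a state that can be left for good is not recurrent), and each of its points
  lies on a cycle. Shadowing such a cycle, traversed many times, by exact orbits in \<open>A\<close> puts every
  point of \<open>C\<close> within \<open>E\<close> of \<open>A\<close>; shadowing long backward orbits in \<open>A\<close> by rounded orbits
  in \<open>C\<close> puts every point of \<open>A\<close> within \<open>E\<close> of \<open>C\<close>. Hence the Hausdorff distance is
  \<open>O(\<delta>)\<close>.\<close>

lemma is_norm_zero: "is_norm nrm \<Longrightarrow> nrm 0 = 0"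
  by (simp add: is_norm_def)

lemma is_norm_minus: "is_norm nrm \<Longrightarrow> nrm (- x) = nrm x"
  unfolding is_norm_def by (metis abs_minus_cancel abs_one mult_1 scaleR_minus1_left)

lemma is_norm_triangle: "is_norm nrm \<Longrightarrow> nrm (x + y) \<le> nrm x + nrm y"
  by (simp add: is_norm_def)

lemma is_norm_scaleR: "is_norm nrm \<Longrightarrow> nrm (c *\<^sub>R x) = \<bar>c\<bar> * nrm x"
  by (simp add: is_norm_def)

lemma is_norm_nonneg:
  assumes "is_norm nrm"
  shows "0 \<le> nrm x"
proof -
  have "nrm (x + - x) \<le> nrm x + nrm (- x)" by (rule is_norm_triangle[OF assms])
  then show ?thesis using assms by (simp add: is_norm_zero is_norm_minus)
qed

lemma is_norm_triangle_diff: "is_norm nrm \<Longrightarrow> nrm (x - z) \<le> nrm (x - y) + nrm (y - z)"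
  using is_norm_triangle[of nrm "x - y" "y - z"] by simp

lemma is_norm_sum_le:
  assumes "is_norm nrm"
  shows "nrm (\<Sum>i\<in>S. f i) \<le> (\<Sum>i\<in>S. nrm (f i))"
proof (induction S rule: infinite_finite_induct)
  case (insert x F)
  then show ?case using is_norm_triangle[OF assms, of "f x" "sum f F"] by simp
qed (simp_all add: is_norm_zero[OF assms])

lemma is_norm_le_sum_components:
  assumes "is_norm nrm"
  shows "nrm (v::real^'n) \<le> (\<Sum>j\<in>UNIV. \<bar>v$j\<bar> * nrm (axis j 1))"
proof -
  have "nrm v = nrm (\<Sum>j\<in>UNIV. (v$j) *\<^sub>R axis j (1::real))"
    by (metis basis_expansion scalar_mult_eq_scaleR)
  also have "\<dots> \<le> (\<Sum>j\<in>UNIV. nrm ((v$j) *\<^sub>R axis j (1::real)))"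
    by (rule is_norm_sum_le[OF assms])
  finally show ?thesis by (simp add: is_norm_scaleR[OF assms])
qed

lemma is_norm_le_norm:
  assumes "is_norm nrm"
  shows "nrm (v::real^'n) \<le> (\<Sum>j\<in>UNIV. nrm (axis j (1::real))) * norm v"
proof -
  have "nrm v \<le> (\<Sum>j\<in>UNIV. \<bar>v$j\<bar> * nrm (axis j 1))" by (rule is_norm_le_sum_components[OF assms])
  also have "\<dots> \<le> (\<Sum>j\<in>UNIV. norm v * nrm (axis j 1))"
    by (intro sum_mono mult_right_mono component_le_norm_cart is_norm_nonneg[OF assms])
  finally show ?thesis by (simp add: sum_distrib_left mult.commute)
qed

lemma roundoff_component_error:
  assumes "0 < \<delta>"
  shows "\<bar>(roundoff \<delta> u - u)$j\<bar> \<le> \<delta> / 2"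
proof -
  let ?t = "u$j / \<delta> + 1/2"
  have "real_of_int \<lfloor>?t\<rfloor> \<le> ?t" "?t < real_of_int \<lfloor>?t\<rfloor> + 1"
    by (rule of_int_floor_le, rule real_of_int_floor_add_one_gt)
  then have "\<delta> * real_of_int \<lfloor>?t\<rfloor> \<le> \<delta> * ?t" "\<delta> * ?t \<le> \<delta> * (real_of_int \<lfloor>?t\<rfloor> + 1)"
    using assms by simp_all
  moreover have "\<delta> * ?t = u$j + \<delta>/2" using assms by (simp add: field_simps)
  ultimately show ?thesis
    unfolding roundoff_def vector_minus_component vec_lambda_beta abs_le_iff distrib_left by linarith
qed

lemma roundoff_error:
  assumes "is_norm nrm" "0 < \<delta>"
  shows "nrm (roundoff \<delta> u - (u::real^'n)) \<le> \<delta> / 2 * (\<Sum>j\<in>UNIV. nrm (axis j (1::real)))"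
proof -
  have "nrm (roundoff \<delta> u - u) \<le> (\<Sum>j\<in>UNIV. \<bar>(roundoff \<delta> u - u)$j\<bar> * nrm (axis j 1))"
    by (rule is_norm_le_sum_components[OF assms(1)])
  also have "\<dots> \<le> (\<Sum>j\<in>UNIV. \<delta> / 2 * nrm (axis j (1::real)))"
    by (intro sum_mono mult_right_mono roundoff_component_error assms(2) is_norm_nonneg[OF assms(1)])
  finally show ?thesis by (simp add: sum_distrib_left)
qed

lemma roundoff_in_lattice: "roundoff \<delta> u \<in> lattice \<delta>"
  unfolding lattice_def roundoff_def
  by (rule CollectI, rule exI[of _ "\<chi> j. \<lfloor>u$j / \<delta> + 1/2\<rfloor>"]) (simp add: vec_eq_iff)

lemma uniform_contraction_factor:
  fixes M :: nat
  assumes "\<forall>i<M. contraction_wrt d (w i)" and d_nonneg: "\<And>x y. 0 \<le> d x y"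
  shows "\<exists>s. 0 \<le> s \<and> s < 1 \<and> (\<forall>i<M. \<forall>x y. d (w i x) (w i y) \<le> s * d x y)"
  using assms(1)
proof (induction M)
  case 0
  show ?case by (intro exI[of _ 0]) simp
next
  case (Suc M)
  then obtain s where s: "0 \<le> s" "s < 1" "\<forall>i<M. \<forall>x y. d (w i x) (w i y) \<le> s * d x y"
    by auto
  obtain t where t: "0 \<le> t" "t < 1" "\<forall>x y. d (w M x) (w M y) \<le> t * d x y"
    using Suc.prems unfolding contraction_wrt_def by blast
  have "d (w i x) (w i y) \<le> max s t * d x y" if "i < Suc M" for i x y
  proof -
    have "d (w i x) (w i y) \<le> s * d x y \<or> d (w i x) (w i y) \<le> t * d x y"
      using that s(3) t(3) less_Suc_eq by auto
    moreover have "s * d x y \<le> max s t * d x y" "t * d x y \<le> max s t * d x y"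
      using d_nonneg by (simp_all add: mult_right_mono)
    ultimately show ?thesis by linarith
  qed
  then show ?case using s t by (intro exI[of _ "max s t"]) auto
qed

lemma perturbed_contraction_step:
  assumes "is_norm nrm" "s < 1"
    and err: "nrm (y' - y) \<le> e"
    and contr: "nrm (y - b) \<le> s * nrm (x - a)"
  shows "nrm (y' - b) - e / (1 - s) \<le> s * (nrm (x - a) - e / (1 - s))"
proof -
  have "nrm (y' - b) \<le> e + s * nrm (x - a)"
    using is_norm_triangle_diff[OF assms(1), of y' b y] err contr by linarith
  moreover have "e - e / (1 - s) = - s * (e / (1 - s))" using assms(2) by (simp add: field_simps)
  ultimately show ?thesis by (simp add: algebra_simps)
qed

definition ifs_step :: "nat \<Rightarrow> (nat \<Rightarrow> 'a \<Rightarrow> 'a) \<Rightarrow> ('a \<times> 'a) set" where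
  "ifs_step M f = {(x, f i x) | x i. i < M}"

abbreviation difs_step ::
    "nat \<Rightarrow> (nat \<Rightarrow> real^'n \<Rightarrow> real^'n) \<Rightarrow> real \<Rightarrow> ((real^'n) \<times> (real^'n)) set" where
  "difs_step M w \<delta> \<equiv> ifs_step M (\<lambda>i x. roundoff \<delta> (w i x))"

lemma Pk_nonneg: "\<forall>i<M. 0 \<le> p i \<Longrightarrow> 0 \<le> Pk M w p \<delta> k x y"
  by (induction k arbitrary: x) (auto intro!: sum_nonneg)

lemma sum_pos_iff_ex_pos:
  fixes f :: "'a \<Rightarrow> 'b::linordered_ab_group_add"
  assumes "finite A" "\<And>x. x \<in> A \<Longrightarrow> 0 \<le> f x"
  shows "0 < sum f A \<longleftrightarrow> (\<exists>x\<in>A. 0 < f x)"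
  using assms sum_pos2[of A _ f] sum_nonpos[of A f] by (meson not_le)

lemma Pk_pos_iff_relpow:
  assumes p: "\<forall>i<M. 0 < p i"
  shows "0 < Pk M w p \<delta> k x y \<longleftrightarrow> (x, y) \<in> difs_step M w \<delta> ^^ k"
proof (induction k arbitrary: x)
  case 0
  show ?case by simp
next
  case (Suc k)
  have p0: "\<forall>i<M. 0 \<le> p i" using p by (simp add: less_imp_le)
  have terms_nonneg: "\<forall>i<M. 0 \<le> p i * Pk M w p \<delta> k (roundoff \<delta> (w i x)) y"
    using p0 by (simp add: Pk_nonneg)
  have "0 < Pk M w p \<delta> (Suc k) x y \<longleftrightarrow> (\<exists>i<M. 0 < p i * Pk M w p \<delta> k (roundoff \<delta> (w i x)) y)"
    using sum_pos_iff_ex_pos[of "{..<M}" "\<lambda>i. p i * Pk M w p \<delta> k (roundoff \<delta> (w i x)) y"]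
      terms_nonneg by auto
  also have "\<dots> \<longleftrightarrow> (\<exists>i<M. (roundoff \<delta> (w i x), y) \<in> difs_step M w \<delta> ^^ k)"
    using p Suc.IH by (auto simp: zero_less_mult_iff)
  also have "\<dots> \<longleftrightarrow> (\<exists>z. (x, z) \<in> difs_step M w \<delta> \<and> (z, y) \<in> difs_step M w \<delta> ^^ k)"
    by (auto simp: ifs_step_def)
  also have "\<dots> \<longleftrightarrow> (x, y) \<in> difs_step M w \<delta> ^^ Suc k"
    by (blast intro: relpow_Suc_I2 dest: relpow_Suc_D2)
  finally show ?case .
qed

lemma accessible_iff_trancl:
  "\<forall>i<M. 0 < p i \<Longrightarrow> accessible M w p \<delta> x y \<longleftrightarrow> (x, y) \<in> (difs_step M w \<delta>)\<^sup>+"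
  unfolding accessible_def trancl_power by (simp add: Pk_pos_iff_relpow Suc_le_eq)

lemma fpass_nonneg: "\<forall>i<M. 0 \<le> p i \<Longrightarrow> 0 \<le> fpass M w p \<delta> k x y"
  by (induction k arbitrary: x) (auto intro!: sum_nonneg)

lemma fpass_le_Pk:
  assumes "\<forall>i<M. 0 \<le> p i"
  shows "fpass M w p \<delta> k x y \<le> Pk M w p \<delta> k x y"
proof (induction k arbitrary: x)
  case (Suc k)
  show ?case unfolding fpass.simps Pk.simps
    using assms Suc.IH Pk_nonneg[OF assms]
    by (intro sum_mono mult_left_mono) auto
qed simp

lemma fpass_partial_sum_le:
  assumes p: "\<forall>i<M. 0 \<le> p i"
  shows "(\<Sum>k<Suc K. fpass M w p \<delta> k x y) \<le>
    (\<Sum>i<M. p i * (if roundoff \<delta> (w i x) = y then 1 else (\<Sum>k<K. fpass M w p \<delta> k (roundoff \<delta> (w i x)) y)))"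
proof -
  have "(\<Sum>k<Suc K. fpass M w p \<delta> k x y) = (\<Sum>k<K. fpass M w p \<delta> (Suc k) x y)"
    by (simp only: sum.lessThan_Suc_shift) simp
  also have "\<dots> = (\<Sum>i<M. p i * (\<Sum>k<K. if roundoff \<delta> (w i x) = y then (if k = 0 then 1 else 0)
      else fpass M w p \<delta> k (roundoff \<delta> (w i x)) y))"
    by (simp add: sum_distrib_left sum.swap[of _ "{..<K}"])
  also have "\<dots> \<le> (\<Sum>i<M. p i * (if roundoff \<delta> (w i x) = y then 1
      else (\<Sum>k<K. fpass M w p \<delta> k (roundoff \<delta> (w i x)) y)))"
    using p by (intro sum_mono mult_left_mono) auto
  finally show ?thesis .
qed

lemma fpass_partial_sum_le_1:
  assumes p: "\<forall>i<M. 0 \<le> p i" "(\<Sum>i<M. p i) = 1"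
  shows "(\<Sum>k<K. fpass M w p \<delta> k x y) \<le> 1"
proof (induction K arbitrary: x)
  case (Suc K)
  have "(\<Sum>k<Suc K. fpass M w p \<delta> k x y) \<le> (\<Sum>i<M. p i *
      (if roundoff \<delta> (w i x) = y then 1 else (\<Sum>k<K. fpass M w p \<delta> k (roundoff \<delta> (w i x)) y)))"
    by (rule fpass_partial_sum_le[OF p(1)])
  also have "\<dots> \<le> (\<Sum>i<M. p i * 1)"
    using p(1) Suc.IH by (intro sum_mono mult_left_mono) auto
  finally show ?case using p(2) by simp
qed simp

lemma positive_recurrent_step_returns:
  assumes p: "\<forall>i<M. 0 < p i" "(\<Sum>i<M. p i) = 1"
    and rec: "positive_recurrent M w p \<delta> x" and step: "(x, y) \<in> difs_step M w \<delta>"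
  shows "(y, x) \<in> (difs_step M w \<delta>)\<^sup>*"
proof (rule ccontr)
  assume no_return: "(y, x) \<notin> (difs_step M w \<delta>)\<^sup>*"
  have p0: "\<forall>i<M. 0 \<le> p i" using p(1) by (simp add: less_imp_le)
  obtain i0 where i0: "i0 < M" "y = roundoff \<delta> (w i0 x)" using step by (auto simp: ifs_step_def)
  have "y \<noteq> x" using no_return by auto
  have fpass_y: "fpass M w p \<delta> k y x = 0" for k
  proof -
    have "\<not> 0 < Pk M w p \<delta> k y x"
      using no_return Pk_pos_iff_relpow[OF p(1)] relpow_imp_rtrancl by blast
    then show ?thesis using fpass_le_Pk[OF p0] fpass_nonneg[OF p0] by (meson antisym not_less order_trans)
  qed
  \<comment> \<open>a run whose first step is \<open>w i0\<close> never returns to \<open>x\<close>\<close>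
  have bound: "(\<Sum>k<Suc K. fpass M w p \<delta> k x x) \<le> 1 - p i0" for K
  proof -
    let ?S = "\<lambda>i. p i * (if roundoff \<delta> (w i x) = x then 1
      else (\<Sum>k<K. fpass M w p \<delta> k (roundoff \<delta> (w i x)) x))"
    have "(\<Sum>k<Suc K. fpass M w p \<delta> k x x) \<le> (\<Sum>i<M. ?S i)"
      by (rule fpass_partial_sum_le[OF p0])
    also have "\<dots> = ?S i0 + (\<Sum>i\<in>{..<M}-{i0}. ?S i)"
      using i0 by (simp add: sum.remove)
    also have "\<dots> \<le> 0 + (\<Sum>i\<in>{..<M}-{i0}. p i * 1)"
      using i0 \<open>y \<noteq> x\<close> fpass_y p0 fpass_partial_sum_le_1[OF p0 p(2)]
      by (intro add_mono sum_mono mult_left_mono) auto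
    also have "\<dots> = 1 - p i0"
      using p(2) sum.remove[of "{..<M}" i0 p] i0 by simp
    finally show ?thesis .
  qed
  have "(\<lambda>K. \<Sum>k<Suc K. fpass M w p \<delta> k x x) \<longlonglongrightarrow> 1"
    using rec LIMSEQ_Suc unfolding positive_recurrent_def sums_def by blast
  then have "1 \<le> 1 - p i0" using bound by (intro LIMSEQ_le_const2) auto
  then show False using p(1) i0 by auto
qed

lemma pos_rec_class_step_closed:
  assumes p: "\<forall>i<M. 0 < p i" "(\<Sum>i<M. p i) = 1"
    and C: "pos_rec_class M w p \<delta> C" and x: "x \<in> C" and step: "(x, y) \<in> difs_step M w \<delta>"
  shows "y \<in> C"
proof -
  have cc: "communication_class M w p \<delta> C" and rec: "positive_recurrent M w p \<delta> x"
    using C x unfolding pos_rec_class_def by auto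
  have C_paths: "(u, v) \<in> (difs_step M w \<delta>)\<^sup>+" if "u \<in> C" "v \<in> C" for u v
    using cc that unfolding communication_class_def mutually_accessible_def accessible_iff_trancl[OF p(1)]
    by blast
  have to_x: "(u, x) \<in> (difs_step M w \<delta>)\<^sup>*" if "u \<in> insert y C" for u
  proof (cases "u = y")
    case False
    then show ?thesis using that C_paths[OF _ x] by (simp add: trancl_into_rtrancl)
  qed (simp add: positive_recurrent_step_returns[OF p rec step])
  have from_x: "(x, v) \<in> (difs_step M w \<delta>)\<^sup>+" if "v \<in> insert y C" for v
    using that C_paths[OF x] step by auto
  have "mutually_accessible M w p \<delta> (insert y C)"
    unfolding mutually_accessible_def accessible_iff_trancl[OF p(1)]
    using rtrancl_trancl_trancl[OF to_x from_x] by blast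
  moreover have "insert y C \<subseteq> lattice \<delta>"
    using cc step roundoff_in_lattice unfolding communication_class_def ifs_step_def by auto
  ultimately have "insert y C = C" using cc unfolding communication_class_def by blast
  then show ?thesis by blast
qed

lemma pos_rec_class_rtrancl_closed:
  assumes p: "\<forall>i<M. 0 < p i" "(\<Sum>i<M. p i) = 1"
    and C: "pos_rec_class M w p \<delta> C" and x: "x \<in> C"
  shows "(x, y) \<in> (difs_step M w \<delta>)\<^sup>* \<Longrightarrow> y \<in> C"
  by (induction rule: rtrancl_induct) (auto intro: x pos_rec_class_step_closed[OF p C])

lemma shadowing_forward:
  fixes d :: "'a \<Rightarrow> 'a \<Rightarrow> real"
  assumes step: "\<forall>i<M. \<forall>x a. d (f i x) (g i a) - E \<le> s * (d x a - E)" and s: "0 \<le> s"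
    and inv: "\<forall>i<M. g i ` A \<subseteq> A"
  shows "(x, y) \<in> ifs_step M f ^^ k \<Longrightarrow> a \<in> A \<Longrightarrow> \<exists>b\<in>A. d y b - E \<le> s^k * (d x a - E)"
proof (induction k arbitrary: y)
  case (Suc k)
  obtain z i where z: "(x, z) \<in> ifs_step M f ^^ k" "i < M" "y = f i z"
    using Suc.prems(1) by (auto simp: ifs_step_def)
  obtain b where b: "b \<in> A" "d z b - E \<le> s^k * (d x a - E)"
    using Suc.IH[OF z(1) Suc.prems(2)] by blast
  have "d y (g i b) - E \<le> s * (d z b - E)" using step z by auto
  also have "\<dots> \<le> s^Suc k * (d x a - E)" using mult_left_mono[OF b(2) s] by (simp add: mult.assoc)
  finally show ?case using inv z(2) b(1) by blast
qed auto

lemma shadowing_backward: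
  fixes d :: "'a \<Rightarrow> 'a \<Rightarrow> real"
  assumes step: "\<forall>i<M. \<forall>x a. d (f i x) (g i a) - E \<le> s * (d x a - E)" and s: "0 \<le> s"
    and cover: "A \<subseteq> (\<Union>i<M. g i ` A)"
  shows "a \<in> A \<Longrightarrow> \<exists>b\<in>A. \<exists>y. (x, y) \<in> ifs_step M f ^^ k \<and> d y a - E \<le> s^k * (d x b - E)"
proof (induction k arbitrary: a)
  case (Suc k)
  obtain i a' where a': "i < M" "a' \<in> A" "a = g i a'" using cover Suc.prems by blast
  obtain b y where b: "b \<in> A" "(x, y) \<in> ifs_step M f ^^ k" "d y a' - E \<le> s^k * (d x b - E)"
    using Suc.IH[OF a'(2)] by blast
  have "(x, f i y) \<in> ifs_step M f ^^ Suc k" using b(2) a'(1) by (auto simp: ifs_step_def)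
  moreover have "d (f i y) a - E \<le> s * (d y a' - E)" using step a' by auto
  moreover have "\<dots> \<le> s^Suc k * (d x b - E)" using mult_left_mono[OF b(3) s] by (simp add: mult.assoc)
  ultimately show ?case using b(1) by force
qed auto

lemma relpow_cycle_mult: "(x, x) \<in> R ^^ k \<Longrightarrow> (x, x) \<in> R ^^ (m * k)"
  by (induction m) (auto simp: relpow_add)

lemma INF_ennreal_le_of_power_bound:
  fixes s D E :: real
  assumes s: "0 \<le> s" "s < 1" and "0 \<le> E"
    and approx: "\<And>N. \<exists>n\<ge>N. \<exists>t\<in>T. f t - E \<le> s^n * D"
  shows "(INF t\<in>T. ennreal (f t)) \<le> ennreal E"
proof (rule ennreal_le_epsilon)
  fix \<epsilon> :: real assume "0 < \<epsilon>"
  have "(\<lambda>n. s^n * \<bar>D\<bar>) \<longlonglongrightarrow> 0" using s by (intro tendsto_mult_left_zero LIMSEQ_power_zero) simp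
  then have "\<forall>\<^sub>F n in sequentially. s^n * \<bar>D\<bar> < \<epsilon>" using \<open>0 < \<epsilon>\<close> by (rule order_tendstoD)
  then obtain N where N: "\<And>n. n \<ge> N \<Longrightarrow> s^n * \<bar>D\<bar> < \<epsilon>"
    unfolding eventually_sequentially by blast
  obtain n t where t: "n \<ge> N" "t \<in> T" "f t - E \<le> s^n * D" using approx by blast
  have "s^n * D \<le> s^n * \<bar>D\<bar>" using s by (simp add: mult_left_mono)
  then have "f t \<le> E + \<epsilon>" using t N[OF t(1)] by linarith
  have "(INF t\<in>T. ennreal (f t)) \<le> ennreal (f t)" using t(2) by (rule INF_lower)
  also have "\<dots> \<le> ennreal (E + \<epsilon>)" using \<open>f t \<le> E + \<epsilon>\<close> by (rule ennreal_leI)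
  also have "\<dots> = ennreal E + ennreal \<epsilon>" using \<open>0 \<le> E\<close> \<open>0 < \<epsilon>\<close> by (simp add: ennreal_plus)
  finally show "(INF t\<in>T. ennreal (f t)) \<le> ennreal E + ennreal \<epsilon>" .
qed

lemma communication_class_near_attractor:
  fixes nrm :: "real^'n \<Rightarrow> real"
  assumes p: "\<forall>i<M. 0 < p i"
    and step: "\<forall>i<M. \<forall>x a. nrm (roundoff \<delta> (w i x) - w i a) - E \<le> s * (nrm (x - a) - E)"
    and s: "0 \<le> s" "s < 1" and E: "0 \<le> E"
    and A: "A \<noteq> {}" "\<forall>i<M. w i ` A \<subseteq> A"
    and C: "communication_class M w p \<delta> C" and x: "x \<in> C"
  shows "(INF a\<in>A. ennreal (nrm (x - a))) \<le> ennreal E"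
proof -
  obtain k where k: "0 < k" "(x, x) \<in> difs_step M w \<delta> ^^ k"
    using C x unfolding communication_class_def mutually_accessible_def
      accessible_iff_trancl[OF p] trancl_power by blast
  obtain a where a: "a \<in> A" using A(1) by blast
  have "\<exists>n\<ge>N. \<exists>b\<in>A. nrm (x - b) - E \<le> s^n * (nrm (x - a) - E)" for N
  proof -
    obtain b where "b \<in> A" "nrm (x - b) - E \<le> s^(N * k) * (nrm (x - a) - E)"
      using shadowing_forward[OF step s(1) A(2) relpow_cycle_mult[OF k(2)] a] by blast
    moreover have "N \<le> N * k" using k(1) by simp
    ultimately show ?thesis by blast
  qed
  then show ?thesis by (rule INF_ennreal_le_of_power_bound[OF s E])
qed

lemma attractor_near_pos_rec_class:
  fixes nrm :: "real^'n \<Rightarrow> real"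
  assumes norm: "is_norm nrm" and p: "\<forall>i<M. 0 < p i" "(\<Sum>i<M. p i) = 1"
    and step: "\<forall>i<M. \<forall>x a. nrm (roundoff \<delta> (w i x) - w i a) - E \<le> s * (nrm (x - a) - E)"
    and s: "0 \<le> s" "s < 1" and E: "0 \<le> E"
    and A: "bounded A" "A \<subseteq> (\<Union>i<M. w i ` A)"
    and C: "pos_rec_class M w p \<delta> C" and a: "a \<in> A"
  shows "(INF x\<in>C. ennreal (nrm (x - a))) \<le> ennreal E"
proof -
  define K where "K = (\<Sum>j\<in>UNIV. nrm (axis j (1::real) :: real^'n))"
  have K0: "0 \<le> K" unfolding K_def by (intro sum_nonneg is_norm_nonneg[OF norm])
  obtain x0 where x0: "x0 \<in> C" using C unfolding pos_rec_class_def communication_class_def by blast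
  obtain R where R: "\<forall>b\<in>A. norm (x0 - b) \<le> R"
    using A(1) bounded_any_center[of A x0] by (auto simp: dist_norm)
  have "\<exists>n\<ge>N. \<exists>y\<in>C. nrm (y - a) - E \<le> s^n * (K * R)" for N
  proof -
    obtain b y where b: "b \<in> A" "(x0, y) \<in> difs_step M w \<delta> ^^ N"
      "nrm (y - a) - E \<le> s^N * (nrm (x0 - b) - E)"
      using shadowing_backward[OF step s(1) A(2) a] by blast
    have "y \<in> C" using pos_rec_class_rtrancl_closed[OF p C x0] relpow_imp_rtrancl b(2) by blast
    have "nrm (x0 - b) \<le> K * norm (x0 - b)" unfolding K_def by (rule is_norm_le_norm[OF norm])
    also have "\<dots> \<le> K * R" using R b(1) K0 by (simp add: mult_left_mono)
    finally have "s^N * (nrm (x0 - b) - E) \<le> s^N * (K * R)" using s E by (simp add: mult_left_mono)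
    then have "nrm (y - a) - E \<le> s^N * (K * R)" using b(3) by linarith
    then show ?thesis using \<open>y \<in> C\<close> by blast
  qed
  then show ?thesis by (rule INF_ennreal_le_of_power_bound[OF s E])
qed

lemma hausdorff_dist_pos_rec_class_le:
  fixes nrm :: "real^'n \<Rightarrow> real"
  assumes norm: "is_norm nrm"
    and contr: "\<forall>i<M. \<forall>x y. nrm (w i x - w i y) \<le> s * nrm (x - y)" and s: "0 \<le> s" "s < 1"
    and p: "\<forall>i<M. 0 < p i" "(\<Sum>i<M. p i) = 1"
    and A: "A \<noteq> {}" "bounded A" "A = (\<Union>i<M. w i ` A)"
    and \<delta>: "0 < \<delta>" and C: "pos_rec_class M w p \<delta> C"
  shows "hausdorff_dist (\<lambda>x y. nrm (x - y)) C A \<le> ennreal (\<delta> / 2 * (\<Sum>j\<in>UNIV. nrm (axis j 1)) / (1 - s))"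
    (is "_ \<le> ennreal ?E")
proof -
  have E: "0 \<le> ?E" using \<delta> s by (simp add: sum_nonneg is_norm_nonneg[OF norm])
  have step: "\<forall>i<M. \<forall>x a. nrm (roundoff \<delta> (w i x) - w i a) - ?E \<le> s * (nrm (x - a) - ?E)"
    using contr by (blast intro: perturbed_contraction_step[OF norm s(2) roundoff_error[OF norm \<delta>]])
  have "communication_class M w p \<delta> C" using C unfolding pos_rec_class_def by blast
  then have "(INF a\<in>A. ennreal (nrm (x - a))) \<le> ennreal ?E" if "x \<in> C" for x
    using communication_class_near_attractor[OF p(1) step s E A(1)] A(3) that by blast
  moreover have "(INF x\<in>C. ennreal (nrm (x - a))) \<le> ennreal ?E" if "a \<in> A" for a
    using attractor_near_pos_rec_class[OF norm p step s E A(2) _ C that] A(3) by blast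
  ultimately show ?thesis
    unfolding hausdorff_dist_def by (intro max.boundedI SUP_least)
qed

theorem corollary8:
  fixes nrm :: "real^'n \<Rightarrow> real"
    and M :: nat
    and w :: "nat \<Rightarrow> real^'n \<Rightarrow> real^'n"
    and p :: "nat \<Rightarrow> real"
    and A :: "(real^'n) set"
    and C :: "real \<Rightarrow> (real^'n) set"
  assumes norm: "is_norm nrm"
    and M: "M \<ge> 1"
    and contr: "\<forall>i<M. contraction_wrt (\<lambda>x y. nrm (x - y)) (w i)"
    and prob: "\<forall>i<M. 0 < p i \<and> p i \<le> 1" "(\<Sum>i<M. p i) = 1"
    and attr: "A \<noteq> {}" "compact A" "A = (\<Union>i<M. w i ` A)"
    and choice: "\<forall>\<^sub>F \<delta> in at_right 0. pos_rec_class M w p \<delta> (C \<delta>)"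
  shows "((\<lambda>\<delta>. hausdorff_dist (\<lambda>x y. nrm (x - y)) (C \<delta>) A) \<longlongrightarrow> 0) (at_right 0)"
proof -
  have p: "\<forall>i<M. 0 < p i" using prob(1) by blast
  obtain s where s: "0 \<le> s" "s < 1" "\<forall>i<M. \<forall>x y. nrm (w i x - w i y) \<le> s * nrm (x - y)"
    using uniform_contraction_factor[OF contr] is_norm_nonneg[OF norm] by blast
  define K where "K = (\<Sum>j\<in>UNIV. nrm (axis j (1::real) :: real^'n))"
  have bound: "\<forall>\<^sub>F \<delta> in at_right 0.
      hausdorff_dist (\<lambda>x y. nrm (x - y)) (C \<delta>) A \<le> ennreal (\<delta> / 2 * K / (1 - s))"
    using choice eventually_at_right_less[of "0::real"]
  proof eventually_elim
    case (elim \<delta>)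
    then show ?case unfolding K_def
      using hausdorff_dist_pos_rec_class_le[OF norm s(3,1,2) p prob(2) attr(1)
          compact_imp_bounded[OF attr(2)] attr(3) elim(2,1)] by blast
  qed
  have "((\<lambda>\<delta>. \<delta> / 2 * K / (1 - s)) \<longlongrightarrow> 0) (at_right 0)"
    using tendsto_mult_left_zero[OF tendsto_ident_at[of 0 "{0<..}"], of "K / (2 * (1 - s))"]
    by (simp add: field_simps)
  then have lim: "((\<lambda>\<delta>. ennreal (\<delta> / 2 * K / (1 - s))) \<longlongrightarrow> 0) (at_right 0)"
    using tendsto_ennrealI[of _ 0] by simp
  show ?thesis
    by (rule tendsto_sandwich[OF _ bound tendsto_const lim]) simp
qed

end
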